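(* Let $m,r,s,t$ be any integers and $n\ge0$ an integer, and set \[ X=q^mu_{r-s}^2+q^{2m-s}u_{r-m}^2+q^mu_{r-s}u_{r-m}v_{m-s}, \] assumed nonzero. Then \[ \begin{aligned} &\sum_{j=0}^{n}(-1)^jq^{(m-s)j}u_{r-s}^{n-j}u_{r-m}^{j}w_{(s-m)j+mn+t}\\ &=\sum_{j=0}^{n}\frac{u_{m-s}^j}{2^{j+1}}\left(u_{r-s}^{n-j}w_{(r-m)j+mn+t}+(-1)^{n-j}q^{(m-s)(n-j)}u_{r-m}^{n-j}w_{s(n-j)+t+rj}\right)\\ &=\frac{u_{r-s}^{n+2}w_{mn+t}+u_{r-s}^{n+1}u_{r-m}w_{mn+m+t-s}}{u_{r-s}^2+q^{m-s}u_{r-m}^2+u_{r-s}u_{r-m}v_{m-s}} +\frac{(-1)^nu_{r-m}^{n+1}\left(q^{(m-s)(n+1)+m}u_{r-s}w_{sn+s+t-m}+q^{(m-s)(n+2)+s}u_{r-m}w_{sn+t}\right)}{X}. \end{aligned} \]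
   Context: Let $p,q$ be real numbers with $p\neq0$, $q\neq0$ and $p^2-4q>0$; let $a,b$ be complex numbers. Put $\Delta=\sqrt{p^2-4q}>0$, $\tau=(p+\Delta)/2$, $\sigma=(p-\Delta)/2$. The Horadam sequence $w_n=w_n(a,b;p,q)$ is defined by $w_0=a$, $w_1=b$, $w_n=pw_{n-1}-qw_{n-2}$, extended to all integers $n$ via $w_{n-2}=(pw_{n-1}-w_n)/q$; equivalently $w_n=A\tau^n+B\sigma^n$ with $A=(b-a\sigma)/\Delta$, $B=(a\tau-b)/\Delta$. Write $u_n=w_n(0,1;p,q)=(\tau^n-\sigma^n)/\Delta$ and $v_n=w_n(2,p;p,q)=\tau^n+\sigma^n$. *)

theory Defs
  imports Complex_Main
begin

definition hDelta :: "real \<Rightarrow> real \<Rightarrow> real" where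
  "hDelta p q = sqrt (p^2 - 4*q)"

definition htau :: "real \<Rightarrow> real \<Rightarrow> real" where
  "htau p q = (p + hDelta p q) / 2"

definition hsigma :: "real \<Rightarrow> real \<Rightarrow> real" where
  "hsigma p q = (p - hDelta p q) / 2"

definition horadam :: "complex \<Rightarrow> complex \<Rightarrow> real \<Rightarrow> real \<Rightarrow> int \<Rightarrow> complex" where
  "horadam a b p q n =
     (b - a * of_real (hsigma p q)) / of_real (hDelta p q) * of_real (htau p q powi n)
   + (a * of_real (htau p q) - b) / of_real (hDelta p q) * of_real (hsigma p q powi n)"

text \<open>u_n = w_n(0,1;p,q) and v_n = w_n(2,p;p,q), real-valued.\<close>
definition hu :: "real \<Rightarrow> real \<Rightarrow> int \<Rightarrow> real" where
  "hu p q n = (htau p q powi n - hsigma p q powi n) / hDelta p q"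

definition hv :: "real \<Rightarrow> real \<Rightarrow> int \<Rightarrow> real" where
  "hv p q n = htau p q powi n + hsigma p q powi n"

end

theory Submission
  imports Defs
begin

text \<open>In Binet form w(k) = A \<tau>^k + B \<sigma>^k, and all three expressions are linear in the
  sequence w, so it suffices to evaluate them on w(k) = z^k for a root z. Put
  \<alpha> = u(r-s) z^m and \<beta> = -q^(m-s) u(r-m) z^s; at both roots the Lucas-type identity
  u(m-s) z^r = \<alpha> + \<beta> holds. On z^k the alternating sum is z^t \<Sum>j. \<alpha>^(n-j) \<beta>^j, the
  middle sum is the same homogeneous sum expanded around the midpoint (\<alpha> + \<beta>)/2, and the
  closed form is z^t (\<alpha>^(n+1) - \<beta>^(n+1)) / (\<alpha> - \<beta>), because X is the product of \<alpha> - \<beta>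
  taken at the two roots.\<close>

lemma diff_power_eq_sum_atLeastAtMost:
  fixes a c :: "'a::comm_ring_1" and n :: nat
  shows "a^(n+1) - c^(n+1) = (a - c) * (\<Sum>j=0..n. a^(n-j) * c^j)"
proof -
  have "a^(Suc n) - c^(Suc n) = (a - c) * (\<Sum>j<Suc n. a^j * c^(n-j))"
    by (rule diff_power_eq_sum)
  also have "(\<Sum>j<Suc n. a^j * c^(n-j)) = (\<Sum>j=0..n. a^j * c^(n-j))"
    by (intro sum.cong) auto
  also have "\<dots> = (\<Sum>j=0..n. a^(n-j) * c^j)"
    by (subst sum.atLeastAtMost_rev[of _ 0 n, simplified]) (auto intro!: sum.cong)
  finally show ?thesis by simp
qed

lemma sum_power_mult_power_midpoint:
  fixes a c :: "'a::field_char_0" and n :: nat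
  shows "(\<Sum>j=0..n. a^(n-j) * c^j) = (\<Sum>j=0..n. ((a+c)/2)^j / 2 * (a^(n-j) + c^(n-j)))"
proof (cases "a = c")
  case True
  then show ?thesis
    by (intro sum.cong) (auto simp flip: power_add)
next
  case False
  define b where "b = (a+c)/2"
  have "(a - c) * (\<Sum>j=0..n. b^j / 2 * (a^(n-j) + c^(n-j)))
      = (a - b) * (\<Sum>j=0..n. a^(n-j) * b^j) - (c - b) * (\<Sum>j=0..n. c^(n-j) * b^j)"
    unfolding sum_distrib_left sum_subtractf[symmetric]
    by (intro sum.cong) (simp_all add: b_def field_simps)
  also have "\<dots> = (a^(n+1) - b^(n+1)) - (c^(n+1) - b^(n+1))"
    by (simp only: diff_power_eq_sum_atLeastAtMost)
  also have "\<dots> = (a - c) * (\<Sum>j=0..n. a^(n-j) * c^j)"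
    by (simp flip: diff_power_eq_sum_atLeastAtMost)
  finally show ?thesis
    using False by (simp add: b_def)
qed

lemma power_int_affine:
  fixes z :: "'a::field"
  assumes "z \<noteq> 0"
  shows "z powi (a * int k + b) = (z powi a)^k * z powi b"
  using assms by (simp add: power_int_add power_int_power')

lemma power_minus_mult: "(- (a * b * c :: 'a::comm_ring_1))^k = (-1)^k * (a^k * b^k * c^k)"
  by (subst power_minus) (simp add: power_mult_distrib)

lemma lucas_powi_shift:
  fixes x y z :: real
  assumes x: "x \<noteq> 0" and y: "y \<noteq> 0" and xy: "x \<noteq> y" and z: "z = x \<or> z = y"
  defines "u \<equiv> \<lambda>k. (x powi k - y powi k) / (x - y)"
  shows "u (m-s) * z powi r = u (r-s) * z powi m - (x*y) powi (m-s) * u (r-m) * z powi s"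
proof -
  have pd: "x powi (a - b) = x powi a / x powi b" "y powi (a - b) = y powi a / y powi b" for a b
    using x y by (auto simp: power_int_diff)
  have key: "(x powi (m-s) - y powi (m-s)) * z powi r
      = (x powi (r-s) - y powi (r-s)) * z powi m
        - (x*y) powi (m-s) * (x powi (r-m) - y powi (r-m)) * z powi s"
  proof -
    have "(a/e - b/f) * g = (g/e - h/f) * a - (a*b)/(e*f) * (g/a - h/b) * e"
      and "(a/e - b/f) * h = (g/e - h/f) * b - (a*b)/(e*f) * (g/a - h/b) * f"
      if "a \<noteq> 0" "b \<noteq> 0" "e \<noteq> 0" "f \<noteq> 0" for a b e f g h :: real
      using that by (simp_all add: field_simps)
    note atoms = this[where a="x powi m" and b="y powi m" and e="x powi s" and f="y powi s"
        and g="x powi r" and h="y powi r"]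
    from z show ?thesis
      unfolding pd power_int_mult_distrib using atoms x y by auto
  qed
  have "u (m-s) * z powi r = ((x powi (m-s) - y powi (m-s)) * z powi r) / (x - y)"
    by (simp add: u_def)
  also have "\<dots> = ((x powi (r-s) - y powi (r-s)) * z powi m
        - (x*y) powi (m-s) * (x powi (r-m) - y powi (r-m)) * z powi s) / (x - y)"
    by (simp only: key)
  also have "\<dots> = u (r-s) * z powi m - (x*y) powi (m-s) * u (r-m) * z powi s"
    using xy by (simp add: u_def diff_divide_distrib right_diff_distrib left_diff_distrib)
  finally show ?thesis .
qed

lemma quadratic_form_factor:
  fixes x y U V :: real
  assumes x: "x \<noteq> 0" and y: "y \<noteq> 0"
  shows "(x*y) powi m * (U^2 + (x*y) powi (m-s) * V^2 + U * V * (x powi (m-s) + y powi (m-s)))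
       = (U * x powi m + (x*y) powi (m-s) * V * x powi s) * (U * y powi m + (x*y) powi (m-s) * V * y powi s)"
proof -
  have atoms: "(a*b) * (U^2 + c * V^2 + U * V * (a/e + b/f)) = (U * a + c * V * e) * (U * b + c * V * f)"
    if "e \<noteq> 0" "f \<noteq> 0" "c = (a*b)/(e*f)" for a b e f c :: real
    using that by (simp add: field_simps power2_eq_square)
  have "(x*y) powi (m-s) = (x powi m * y powi m) / (x powi s * y powi s)"
    using x y by (simp add: power_int_mult_distrib power_int_diff)
  then show ?thesis
    using atoms[where a="x powi m" and b="y powi m" and e="x powi s" and f="y powi s" and c="(x*y) powi (m-s)"] x y
    by (simp add: power_int_mult_distrib power_int_diff)
qed

lemma hDelta_pos: "p^2 - 4*q > 0 \<Longrightarrow> hDelta p q > 0"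
  by (simp add: hDelta_def)

lemma htau_minus_hsigma: "htau p q - hsigma p q = hDelta p q"
  by (simp add: htau_def hsigma_def field_simps)

lemma htau_mult_hsigma:
  assumes "p^2 - 4*q \<ge> 0"
  shows "htau p q * hsigma p q = q"
proof -
  have "hDelta p q ^ 2 = p^2 - 4*q" using assms by (simp add: hDelta_def)
  then show ?thesis by (simp add: htau_def hsigma_def field_simps power2_eq_square)
qed

lemma hu_binet: "hu p q k = (htau p q powi k - hsigma p q powi k) / (htau p q - hsigma p q)"
  by (simp add: hu_def htau_minus_hsigma)

definition geo_alpha :: "real \<Rightarrow> real \<Rightarrow> int \<Rightarrow> int \<Rightarrow> int \<Rightarrow> real \<Rightarrow> real" where
  "geo_alpha p q m r s z = hu p q (r-s) * z powi m"

definition geo_beta :: "real \<Rightarrow> real \<Rightarrow> int \<Rightarrow> int \<Rightarrow> int \<Rightarrow> real \<Rightarrow> real" where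
  "geo_beta p q m r s z = - (q powi (m-s) * hu p q (r-m) * z powi s)"

lemma hu_mult_powi_root:
  assumes "p^2 - 4*q > 0" and "q \<noteq> 0" and "z = htau p q \<or> z = hsigma p q"
  shows "hu p q (m-s) * z powi r = geo_alpha p q m r s z + geo_beta p q m r s z"
proof -
  have prod: "htau p q * hsigma p q = q"
    using assms(1) by (intro htau_mult_hsigma) simp
  then have "htau p q \<noteq> 0" "hsigma p q \<noteq> 0"
    using assms(2) by auto
  moreover have "htau p q \<noteq> hsigma p q"
    using htau_minus_hsigma[of p q] hDelta_pos[OF assms(1)] by auto
  ultimately show ?thesis
    using lucas_powi_shift[of "htau p q" "hsigma p q" z m s r] assms(3)
    by (simp add: geo_alpha_def geo_beta_def hu_binet prod)
qed

lemma alternating_term_powi: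
  fixes z q U V :: real
  assumes z: "z \<noteq> 0" and j: "j \<le> n"
  shows "(-1)^j * (q powi ((m-s)*int j) * U^(n-j) * V^j) * z powi ((s-m)*int j + m*int n + t)
     = z powi t * ((U * z powi m)^(n-j) * (- (q powi (m-s) * V * z powi s))^j)"
proof -
  have "(s-m)*int j + m*int n + t = m*int (n-j) + (s*int j + t)"
    using j by (simp add: of_nat_diff algebra_simps)
  then have e: "z powi ((s-m)*int j + m*int n + t) = (z powi m)^(n-j) * ((z powi s)^j * z powi t)"
    by (simp only: power_int_affine[OF z])
  have "q powi ((m-s)*int j) = (q powi (m-s))^j"
    by (simp add: power_int_power')
  then show ?thesis
    unfolding e power_minus_mult power_mult_distrib by simp
qed

lemma halving_term_powi:
  fixes z q U V W :: real
  assumes z: "z \<noteq> 0" and j: "j \<le> n"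
    and shift: "W * z powi r = U * z powi m + - (q powi (m-s) * V * z powi s)"
  shows "W^j / 2^(j+1) * (U^(n-j) * z powi ((r-m)*int j + m*int n + t)
      + (-1)^(n-j) * (q powi ((m-s)*int (n-j)) * V^(n-j)) * z powi (s*int (n-j) + t + r*int j))
   = z powi t * (((U * z powi m + - (q powi (m-s) * V * z powi s)) / 2)^j / 2
        * ((U * z powi m)^(n-j) + (- (q powi (m-s) * V * z powi s))^(n-j)))"
proof -
  have "(r-m)*int j + m*int n + t = r*int j + (m*int (n-j) + t)"
    using j by (simp add: of_nat_diff algebra_simps)
  then have e1: "z powi ((r-m)*int j + m*int n + t) = (z powi r)^j * ((z powi m)^(n-j) * z powi t)"
    by (simp only: power_int_affine[OF z])
  have "s*int (n-j) + t + r*int j = s*int (n-j) + (r*int j + t)"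
    by (simp add: algebra_simps)
  then have e2: "z powi (s*int (n-j) + t + r*int j) = (z powi s)^(n-j) * ((z powi r)^j * z powi t)"
    by (simp only: power_int_affine[OF z])
  have e3: "q powi ((m-s)*int (n-j)) = (q powi (m-s))^(n-j)"
    by (simp add: power_int_power')
  show ?thesis
    unfolding e1 e2 e3 shift[symmetric] power_minus_mult power_divide power_mult_distrib
    by (simp add: algebra_simps)
qed

lemma closed_form_first_numerator:
  fixes z z' U V :: real
  assumes z: "z \<noteq> 0" and z': "z' \<noteq> 0"
  shows "(z*z') powi m * (U^(n+2) * z powi (m*int n + t) + U^(n+1) * V * z powi (m*int n + m + t - s))
       = z powi t * (U * z powi m)^(n+1) * (U * z' powi m + (z*z') powi (m-s) * V * z' powi s)"
proof -
  have e1: "z powi (m*int n + t) = (z powi m)^n * z powi t"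
    using power_int_affine[OF z] .
  have e2: "z powi (m*int n + m + t - s) = (z powi m)^n * (z powi m * z powi t / z powi s)"
    using power_int_affine[OF z, of m n "m + t - s"] z
    by (simp add: power_int_add power_int_diff add.assoc add_diff_eq)
  show ?thesis
    unfolding e1 e2 power_int_mult_distrib
    using z z' by (simp add: power_int_diff field_simps power_mult_distrib)
qed

lemma closed_form_second_numerator:
  fixes z z' U V :: real
  assumes z: "z \<noteq> 0" and z': "z' \<noteq> 0"
  shows "(-1)^n * V^(n+1) * ((z*z') powi ((m-s)*(int n+1)+m) * U * z powi (s*int n+s+t-m)
            + (z*z') powi ((m-s)*(int n+2)+s) * V * z powi (s*int n+t))
       = - (z powi t * (- ((z*z') powi (m-s) * V * z powi s))^(n+1)
             * (U * z' powi m + (z*z') powi (m-s) * V * z' powi s))"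
proof -
  define c where "c = (z*z') powi (m-s)"
  have zz': "z * z' \<noteq> 0" using z z' by simp
  have q1: "(z*z') powi ((m-s)*(int n+1)+m) = c^(n+1) * (z powi m * z' powi m)"
    using power_int_affine[OF zz', of "m-s" "n+1" m]
    by (simp add: c_def add.commute power_int_mult_distrib)
  have q2: "(z*z') powi ((m-s)*(int n+2)+s) = c^(n+1) * (c * (z powi s * z' powi s))"
    using power_int_affine[OF zz', of "m-s" "n+2" s]
    by (simp add: c_def add.commute power_int_mult_distrib)
  have e1: "z powi (s*int n+s+t-m) = (z powi s)^n * (z powi s * z powi t / z powi m)"
    using power_int_affine[OF z, of s n "s + t - m"] z
    by (simp add: power_int_add power_int_diff add.assoc add_diff_eq)
  have e2: "z powi (s*int n+t) = (z powi s)^n * z powi t"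
    using power_int_affine[OF z] .
  have inner: "c^(n+1) * (z powi m * z' powi m) * U * ((z powi s)^n * (z powi s * z powi t / z powi m))
      + c^(n+1) * (c * (z powi s * z' powi s)) * V * ((z powi s)^n * z powi t)
      = c^(n+1) * ((z powi s)^n * z powi s) * z powi t * (U * z' powi m + c * V * z' powi s)"
    using z by (simp add: field_simps)
  show ?thesis
    unfolding c_def[symmetric] q1 q2 e1 e2 inner power_minus_mult by (simp add: algebra_simps)
qed

definition alternating_sum :: "real \<Rightarrow> real \<Rightarrow> int \<Rightarrow> int \<Rightarrow> int \<Rightarrow> int \<Rightarrow> nat \<Rightarrow> (int \<Rightarrow> complex) \<Rightarrow> complex" where
  "alternating_sum p q m r s t n w =
    (\<Sum>j=0..n. (-1)^j * of_real (q powi ((m-s)*int j) * hu p q (r-s) ^ (n-j) * hu p q (r-m) ^ j)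
        * w ((s-m)*int j + m*int n + t))"

definition halving_sum :: "real \<Rightarrow> real \<Rightarrow> int \<Rightarrow> int \<Rightarrow> int \<Rightarrow> int \<Rightarrow> nat \<Rightarrow> (int \<Rightarrow> complex) \<Rightarrow> complex" where
  "halving_sum p q m r s t n w =
    (\<Sum>j=0..n. of_real (hu p q (m-s) ^ j / 2^(j+1)) *
        (of_real (hu p q (r-s) ^ (n-j)) * w ((r-m)*int j + m*int n + t)
         + (-1)^(n-j) * of_real (q powi ((m-s)*int (n-j)) * hu p q (r-m) ^ (n-j))
           * w (s*int (n-j) + t + r*int j)))"

definition closed_form :: "real \<Rightarrow> real \<Rightarrow> int \<Rightarrow> int \<Rightarrow> int \<Rightarrow> int \<Rightarrow> nat \<Rightarrow> (int \<Rightarrow> complex) \<Rightarrow> complex" where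
  "closed_form p q m r s t n w =
    (of_real (hu p q (r-s) ^ (n+2)) * w (m*int n + t)
        + of_real (hu p q (r-s) ^ (n+1) * hu p q (r-m)) * w (m*int n + m + t - s))
      / of_real ((hu p q (r-s))^2 + q powi (m-s) * (hu p q (r-m))^2
                 + hu p q (r-s) * hu p q (r-m) * hv p q (m-s))
    + ((-1)^n * of_real (hu p q (r-m) ^ (n+1)) *
          (of_real (q powi ((m-s)*(int n+1) + m) * hu p q (r-s)) * w (s*int n + s + t - m)
           + of_real (q powi ((m-s)*(int n+2) + s) * hu p q (r-m)) * w (s*int n + t)))
      / of_real (q powi m * (hu p q (r-s))^2 + q powi (2*m-s) * (hu p q (r-m))^2
         + q powi m * hu p q (r-s) * hu p q (r-m) * hv p q (m-s))"

lemma alternating_sum_lincomb: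
  "alternating_sum p q m r s t n (\<lambda>k. A * w k + B * w' k)
    = A * alternating_sum p q m r s t n w + B * alternating_sum p q m r s t n w'"
  by (simp add: alternating_sum_def sum.distrib sum_distrib_left algebra_simps)

lemma halving_sum_lincomb:
  "halving_sum p q m r s t n (\<lambda>k. A * w k + B * w' k)
    = A * halving_sum p q m r s t n w + B * halving_sum p q m r s t n w'"
  by (simp add: halving_sum_def sum.distrib sum_distrib_left algebra_simps)

lemma closed_form_lincomb:
  "closed_form p q m r s t n (\<lambda>k. A * w k + B * w' k)
    = A * closed_form p q m r s t n w + B * closed_form p q m r s t n w'"
  by (simp add: closed_form_def add_divide_distrib algebra_simps)

lemma alternating_sum_powi:
  assumes z: "z \<noteq> 0"
  shows "alternating_sum p q m r s t n (\<lambda>k. of_real (z powi k))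
    = of_real (z powi t * (\<Sum>j=0..n. geo_alpha p q m r s z ^ (n-j) * geo_beta p q m r s z ^ j))"
proof -
  have summand: "(-1)^j * (q powi ((m-s)*int j) * hu p q (r-s) ^ (n-j) * hu p q (r-m) ^ j)
          * z powi ((s-m)*int j + m*int n + t)
      = z powi t * (geo_alpha p q m r s z ^ (n-j) * geo_beta p q m r s z ^ j)" if "j \<le> n" for j
    unfolding geo_alpha_def geo_beta_def using alternating_term_powi[OF z that] .
  show ?thesis
    unfolding alternating_sum_def sum_distrib_left of_real_sum
    using summand[THEN arg_cong[where f="of_real :: real \<Rightarrow> complex"]] by (intro sum.cong refl) auto
qed

lemma halving_sum_powi:
  assumes z: "z \<noteq> 0"
    and shift: "hu p q (m-s) * z powi r = geo_alpha p q m r s z + geo_beta p q m r s z"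
  shows "halving_sum p q m r s t n (\<lambda>k. of_real (z powi k))
    = of_real (z powi t * (\<Sum>j=0..n. geo_alpha p q m r s z ^ (n-j) * geo_beta p q m r s z ^ j))"
proof -
  have summand: "hu p q (m-s) ^ j / 2^(j+1) * (hu p q (r-s) ^ (n-j) * z powi ((r-m)*int j + m*int n + t)
        + (-1)^(n-j) * (q powi ((m-s)*int (n-j)) * hu p q (r-m) ^ (n-j))
          * z powi (s*int (n-j) + t + r*int j))
      = z powi t * (((geo_alpha p q m r s z + geo_beta p q m r s z) / 2)^j / 2
          * (geo_alpha p q m r s z ^ (n-j) + geo_beta p q m r s z ^ (n-j)))" if "j \<le> n" for j
    using halving_term_powi[OF z that] shift by (simp add: geo_alpha_def geo_beta_def)
  show ?thesis
    unfolding halving_sum_def sum_power_mult_power_midpoint sum_distrib_left of_real_sum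
    using summand[THEN arg_cong[where f="of_real :: real \<Rightarrow> complex"]] by (intro sum.cong refl) auto
qed

lemma closed_form_powi:
  assumes z: "z \<noteq> 0" and z': "z' \<noteq> 0" and zz': "z * z' = q"
    and hv: "hv p q (m-s) = z powi (m-s) + z' powi (m-s)"
    and X: "q powi m * (hu p q (r-s))^2 + q powi (2*m-s) * (hu p q (r-m))^2
            + q powi m * hu p q (r-s) * hu p q (r-m) * hv p q (m-s) \<noteq> 0"
  shows "closed_form p q m r s t n (\<lambda>k. of_real (z powi k))
    = of_real (z powi t * (\<Sum>j=0..n. geo_alpha p q m r s z ^ (n-j) * geo_beta p q m r s z ^ j))"
proof -
  define U V where "U = hu p q (r-s)" and "V = hu p q (r-m)"
  define D where "D = U^2 + q powi (m-s) * V^2 + U * V * hv p q (m-s)"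
  define a b where "a = geo_alpha p q m r s z" and "b = geo_beta p q m r s z"
  define a' b' where "a' = geo_alpha p q m r s z'" and "b' = geo_beta p q m r s z'"
  define G where "G = (\<Sum>j=0..n. a^(n-j) * b^j)"
  define N1 where "N1 = U^(n+2) * z powi (m*int n + t) + U^(n+1) * V * z powi (m*int n + m + t - s)"
  define N2 where "N2 = (-1)^n * V^(n+1) * (q powi ((m-s)*(int n+1) + m) * U * z powi (s*int n + s + t - m)
      + q powi ((m-s)*(int n+2) + s) * V * z powi (s*int n + t))"
  have q: "q \<noteq> 0" using z z' zz' by auto
  have X_eq: "q powi m * U^2 + q powi (2*m-s) * V^2 + q powi m * U * V * hv p q (m-s) = q powi m * D"
    using q by (simp add: D_def power_int_diff algebra_simps flip: power_int_add)
  have factor: "q powi m * D = (a - b) * (a' - b')"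
    using quadratic_form_factor[OF z z', where U=U and V=V]
    by (simp add: D_def a_def b_def a'_def b'_def geo_alpha_def geo_beta_def U_def V_def zz' hv)
  have "q powi m * N1 + N2 = z powi t * (a^(n+1) - b^(n+1)) * (a' - b')"
    using closed_form_first_numerator[OF z z', where U=U and V=V]
      closed_form_second_numerator[OF z z', where U=U and V=V]
    by (simp add: N1_def N2_def a_def b_def a'_def b'_def geo_alpha_def geo_beta_def U_def V_def zz'
        algebra_simps)
  also have "\<dots> = z powi t * G * (q powi m * D)"
    unfolding diff_power_eq_sum_atLeastAtMost G_def[symmetric] factor by (simp only: ac_simps)
  finally have "N1 / D + N2 / (q powi m * U^2 + q powi (2*m-s) * V^2 + q powi m * U * V * hv p q (m-s))
      = z powi t * G"
    using X q unfolding U_def[symmetric] V_def[symmetric] X_eq by (simp add: field_simps)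
  from this[THEN arg_cong[where f="of_real :: real \<Rightarrow> complex"]] show ?thesis
    by (simp add: closed_form_def N1_def N2_def G_def a_def b_def U_def V_def D_def)
qed

theorem theorem14:
  fixes p q :: real and a b :: complex and m r s t :: int and n :: nat
  assumes "p \<noteq> 0" and "q \<noteq> 0" and "p^2 - 4*q > 0"
    and "q powi m * (hu p q (r-s))^2 + q powi (2*m-s) * (hu p q (r-m))^2
         + q powi m * hu p q (r-s) * hu p q (r-m) * hv p q (m-s) \<noteq> 0"
  shows
   "(\<Sum>j=0..n. (-1)^j * of_real (q powi ((m-s)*int j) * hu p q (r-s) ^ (n-j) * hu p q (r-m) ^ j)
        * horadam a b p q ((s-m)*int j + m*int n + t))
    = (\<Sum>j=0..n. of_real (hu p q (m-s) ^ j / 2^(j+1)) *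
        (of_real (hu p q (r-s) ^ (n-j)) * horadam a b p q ((r-m)*int j + m*int n + t)
         + (-1)^(n-j) * of_real (q powi ((m-s)*int (n-j)) * hu p q (r-m) ^ (n-j))
           * horadam a b p q (s*int (n-j) + t + r*int j)))
   \<and> (\<Sum>j=0..n. of_real (hu p q (m-s) ^ j / 2^(j+1)) *
        (of_real (hu p q (r-s) ^ (n-j)) * horadam a b p q ((r-m)*int j + m*int n + t)
         + (-1)^(n-j) * of_real (q powi ((m-s)*int (n-j)) * hu p q (r-m) ^ (n-j))
           * horadam a b p q (s*int (n-j) + t + r*int j)))
    = (of_real (hu p q (r-s) ^ (n+2)) * horadam a b p q (m*int n + t)
        + of_real (hu p q (r-s) ^ (n+1) * hu p q (r-m)) * horadam a b p q (m*int n + m + t - s))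
      / of_real ((hu p q (r-s))^2 + q powi (m-s) * (hu p q (r-m))^2
                 + hu p q (r-s) * hu p q (r-m) * hv p q (m-s))
      + ((-1)^n * of_real (hu p q (r-m) ^ (n+1)) *
          (of_real (q powi ((m-s)*(int n+1) + m) * hu p q (r-s)) * horadam a b p q (s*int n + s + t - m)
           + of_real (q powi ((m-s)*(int n+2) + s) * hu p q (r-m)) * horadam a b p q (s*int n + t)))
      / of_real (q powi m * (hu p q (r-s))^2 + q powi (2*m-s) * (hu p q (r-m))^2
         + q powi m * hu p q (r-s) * hu p q (r-m) * hv p q (m-s))"
proof -
  define x y where "x = htau p q" and "y = hsigma p q"
  define A B where "A = (b - a * of_real y) / of_real (hDelta p q)"
    and "B = (a * of_real x - b) / of_real (hDelta p q)"
  define S where "S z = (of_real (z powi t * (\<Sum>j=0..n. geo_alpha p q m r s z ^ (n-j)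
      * geo_beta p q m r s z ^ j)) :: complex)" for z
  have xy: "x * y = q" and yx: "y * x = q"
    using htau_mult_hsigma[of p q] assms(3) by (simp_all add: x_def y_def mult.commute)
  then have x: "x \<noteq> 0" and y: "y \<noteq> 0" using assms(2) by auto
  have hv_xy: "hv p q (m-s) = x powi (m-s) + y powi (m-s)"
    and hv_yx: "hv p q (m-s) = y powi (m-s) + x powi (m-s)"
    by (simp_all add: hv_def x_def y_def)
  have horadam: "horadam a b p q = (\<lambda>k. A * of_real (x powi k) + B * of_real (y powi k))"
    by (simp add: fun_eq_iff horadam_def A_def B_def x_def y_def)
  have "alternating_sum p q m r s t n (horadam a b p q) = A * S x + B * S y"
    unfolding horadam alternating_sum_lincomb alternating_sum_powi[OF x] alternating_sum_powi[OF y] S_def ..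
  moreover have "halving_sum p q m r s t n (horadam a b p q) = A * S x + B * S y"
    using hu_mult_powi_root[OF assms(3,2)] halving_sum_powi[OF x] halving_sum_powi[OF y]
    by (simp add: horadam halving_sum_lincomb S_def x_def y_def)
  moreover have "closed_form p q m r s t n (horadam a b p q) = A * S x + B * S y"
    unfolding horadam closed_form_lincomb S_def
      closed_form_powi[OF x y xy hv_xy assms(4)] closed_form_powi[OF y x yx hv_yx assms(4)] ..
  ultimately show ?thesis
    by (simp only: alternating_sum_def halving_sum_def closed_form_def)
qed

end
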